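(* Let $0<s_1<s_2<1$, $2s_1<d<\frac{2s_1s_2}{s_2-s_1}$, $a>0$, and suppose $g$ satisfies $(G_1)$–$(G_3)$. Then $m_a>0$.
   Context: For $s\in(0,1)$, $|\nabla_s u|_2^2=\int_{\mathbb{R}^d\times\mathbb{R}^d}\frac{|u(x)-u(y)|^2}{|x-y|^{d+2s}}dx\,dy$; $|\cdot|_p$ is the $L^p(\mathbb{R}^d)$ norm; $H^{s_1,s_2}(\mathbb{R}^d)=\{u\in L^2(\mathbb{R}^d):|\nabla_{s_1}u|_2<\infty,\ |\nabla_{s_2}u|_2<\infty\}$. $S_a=\{u\in H^{s_1,s_2}(\mathbb{R}^d):|u|_2^2=a\}$. $g:\mathbb{R}\to\mathbb{R}$, $G(s)=\int_0^sg$, $\widetilde G(s)=\frac12g(s)s-G(s)$. $(G_1)$: $g$ continuous, odd. $(G_2)$: there exist $\alpha,\beta$ with $2+\frac{4s_2}{d}<\alpha<\beta<\frac{2d}{d-2s_1}$ and $\alpha G(s)\le g(s)s\le\beta G(s)$ for all $s$. $(G_3)$: $\widetilde G'$ exists and $\widetilde G'(s)s\ge\alpha\widetilde G(s)$ for all $s$. $I(u)=\frac12|\nabla_{s_1}u|_2^2+\frac12|\nabla_{s_2}u|_2^2-\int_{\mathbb{R}^d}G(u)dx$; $P_\infty(u)=s_1|\nabla_{s_1}u|_2^2+s_2|\nabla_{s_2}u|_2^2-d\int_{\mathbb{R}^d}\widetilde G(u)dx$; $\mathcal{P}_{\infty,a}=\{u\in S_a:P_\infty(u)=0\}$; $m_a=\inf_{u\in\mathcal{P}_{\infty,a}}I(u)$.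 *)

theory Defs
  imports "HOL-Analysis.Analysis"
begin

text \<open>Dimension d = CARD('n); functions u : real^'n \<Rightarrow> real.\<close>

definition gagliardo :: "real \<Rightarrow> (real^'n \<Rightarrow> real) \<Rightarrow> ennreal" where
  "gagliardo s u =
     (\<integral>\<^sup>+ z. ennreal ((u (fst z) - u (snd z))^2
                 / norm (fst z - snd z) powr (real CARD('n) + 2 * s)) \<partial>(lborel \<Otimes>\<^sub>M lborel))"

definition Hspace :: "real \<Rightarrow> real \<Rightarrow> (real^'n \<Rightarrow> real) set" where
  "Hspace s1 s2 = {u. u \<in> borel_measurable lborel \<and> integrable lborel (\<lambda>x. (u x)^2)
                      \<and> gagliardo s1 u < \<infinity> \<and> gagliardo s2 u < \<infinity>}"

text \<open>G(s) = \<int>_0^s g (oriented integral).\<close>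
definition Gprim :: "(real \<Rightarrow> real) \<Rightarrow> real \<Rightarrow> real" where
  "Gprim g s = (LBINT t=0..s. g t)"

definition Gtilde :: "(real \<Rightarrow> real) \<Rightarrow> real \<Rightarrow> real" where
  "Gtilde g s = g s * s / 2 - Gprim g s"

definition energy :: "real \<Rightarrow> real \<Rightarrow> (real \<Rightarrow> real) \<Rightarrow> (real^'n \<Rightarrow> real) \<Rightarrow> real" where
  "energy s1 s2 g u = enn2real (gagliardo s1 u) / 2 + enn2real (gagliardo s2 u) / 2
                       - (\<integral>x. Gprim g (u x) \<partial>lborel)"

definition Pinf :: "real \<Rightarrow> real \<Rightarrow> (real \<Rightarrow> real) \<Rightarrow> (real^'n \<Rightarrow> real) \<Rightarrow> real" where
  "Pinf s1 s2 g u = s1 * enn2real (gagliardo s1 u) + s2 * enn2real (gagliardo s2 u)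
                     - real CARD('n) * (\<integral>x. Gtilde g (u x) \<partial>lborel)"

definition Ssphere :: "real \<Rightarrow> real \<Rightarrow> real \<Rightarrow> (real^'n \<Rightarrow> real) set" where
  "Ssphere s1 s2 a = {u \<in> Hspace s1 s2. (\<integral>x. (u x)^2 \<partial>lborel) = a}"

definition Pohozaev_set :: "real \<Rightarrow> real \<Rightarrow> (real \<Rightarrow> real) \<Rightarrow> real \<Rightarrow> (real^'n \<Rightarrow> real) set" where
  "Pohozaev_set s1 s2 g a = {u \<in> Ssphere s1 s2 a. Pinf s1 s2 g u = 0}"

text \<open>m_a as an extended-real infimum (Inf of empty set = \<infinity>).\<close>
definition m_level :: "'n::finite itself \<Rightarrow> real \<Rightarrow> real \<Rightarrow> (real \<Rightarrow> real) \<Rightarrow> real \<Rightarrow> ereal" where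
  "m_level _ s1 s2 g a =
     (INF u \<in> (Pohozaev_set s1 s2 g a :: (real^'n \<Rightarrow> real) set). ereal (energy s1 s2 g u))"

end

theory Submission
  imports Defs
begin

text \<open>
  Write \<open>A = |\<nabla>\<^sub>s\<^sub>1 u|\<^sub>2\<^sup>2\<close>, \<open>B = |\<nabla>\<^sub>s\<^sub>2 u|\<^sub>2\<^sup>2\<close> and \<open>T = \<integral> G\<^sup>~(u)\<close>. On the Pohozaev set
  \<open>s\<^sub>1 A + s\<^sub>2 B = d T\<close>, and (G2) gives \<open>\<integral> G(u) \<le> T / (\<alpha>/2 - 1)\<close>, so
  \<open>I(u) \<ge> (1/2 - \<kappa> s\<^sub>1) A + (1/2 - \<kappa> s\<^sub>2) B\<close> with \<open>\<kappa> = 1 / (d (\<alpha>/2 - 1))\<close>; both coefficients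
  are positive because \<open>\<alpha> > 2 + 4 s\<^sub>2 / d\<close>. It remains to keep \<open>B\<close> away from 0 on the constraint.

  By (G2), \<open>G\<^sup>~(s) \<le> k \<phi>(|s|)\<close> with \<open>\<phi>(r) = r\<^sup>\<alpha>\<close> for \<open>r \<le> 1\<close> and \<open>\<phi>(r) = r\<^sup>\<beta>\<close> for \<open>r \<ge> 1\<close>.
  The measures \<open>\<mu>(l) = |{|u| \<ge> l}|\<close> satisfy Chebyshev's bound \<open>\<mu>(l) \<le> a / l\<^sup>2\<close> and, comparing
  \<open>u\<close> at nearby points above level \<open>2l\<close> and below level \<open>l\<close>, the doubling estimate
  \<open>\<mu>(2l) \<le> K \<mu>(l)\<^sup>\<gamma> B / l\<^sup>2\<close> with \<open>\<gamma> = 2 s\<^sub>2 / d\<close>. Iterating this De Giorgi-type estimate and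
  summing over dyadic levels gives \<open>\<integral> \<phi>(|u|) \<le> C B\<^sup>\<theta>\<close> with \<open>\<theta> > 1\<close> whenever \<open>B \<le> 1\<close>; small
  levels need \<open>\<alpha> > 2 + 2\<gamma>\<close> and large ones \<open>\<beta> (1 - \<gamma>) < 2\<close>, which follows from
  \<open>\<beta> < 2d / (d - 2 s\<^sub>1)\<close>. Hence \<open>s\<^sub>2 B \<le> d T \<le> d k C B\<^sup>\<theta>\<close>, which bounds \<open>B\<close> from below.
\<close>

section \<open>Growth of the primitive\<close>

lemma Gprim_has_real_derivative:
  assumes "continuous_on UNIV g"
  shows "(Gprim g has_real_derivative g x) (at x)"
proof -
  define a where "a = min 0 x - 1"
  define b where "b = max 0 x + 1"
  have "((\<lambda>u. LBINT y=ereal 0..u. g y) has_vector_derivative (g x)) (at x within {a..b})"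
    by (rule interval_integral_FTC2) (auto simp: a_def b_def intro: continuous_on_subset[OF assms])
  moreover have "at x within {a..b} = at x"
    by (rule at_within_Icc_at) (auto simp: a_def b_def)
  ultimately show ?thesis
    by (simp add: Gprim_def[abs_def] has_real_derivative_iff_has_vector_derivative zero_ereal_def)
qed

lemma continuous_on_Gprim: "continuous_on UNIV g \<Longrightarrow> continuous_on UNIV (Gprim g)"
  using Gprim_has_real_derivative
  by (intro continuous_at_imp_continuous_on ballI DERIV_isCont) blast

definition growth_profile :: "real \<Rightarrow> real \<Rightarrow> real \<Rightarrow> real" where
  "growth_profile p q r = (if r \<le> 1 then r powr p else r powr q)"

lemma growth_profile_nonneg: "growth_profile p q r \<ge> 0"
  by (simp add: growth_profile_def)

lemma borel_measurable_growth_profile [measurable]: "growth_profile p q \<in> borel_measurable borel"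
  unfolding growth_profile_def by measurable

lemma has_real_derivative_mult_powr:
  assumes "(F has_real_derivative D) (at x)" "x > 0"
  shows "((\<lambda>t. F t * t powr (-e)) has_real_derivative x powr (-e - 1) * (D * x - e * F x)) (at x)"
proof -
  have "((\<lambda>t. F t * t powr (-e)) has_real_derivative D * x powr (-e) + F x * (-e * x powr (-e - 1))) (at x)"
    using assms by (auto intro!: derivative_eq_intros)
  moreover have "D * x powr (-e) + F x * (-e * x powr (-e - 1)) = x powr (-e - 1) * (D * x - e * F x)"
    using assms(2) by (simp add: powr_diff powr_minus field_simps)
  ultimately show ?thesis by simp
qed

text \<open>Under \<open>p F(s) \<le> F'(s) s \<le> q F(s)\<close> the quotient \<open>F(s) / s\<^sup>p\<close> increases and \<open>F(s) / s\<^sup>q\<close>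
  decreases.\<close>
lemma le_growth_profile_of_Euler_ineq:
  fixes F f :: "real \<Rightarrow> real"
  assumes deriv: "\<And>s. s > 0 \<Longrightarrow> (F has_real_derivative f s) (at s)"
    and Euler: "\<And>s. s > 0 \<Longrightarrow> p * F s \<le> f s * s \<and> f s * s \<le> q * F s"
    and "s > 0"
  shows "F s \<le> F 1 * growth_profile p q s"
proof (cases "s \<le> 1")
  case True
  define h where "h t = F t * t powr (-p)" for t
  have "h s \<le> h 1"
  proof (rule DERIV_nonneg_imp_nondecreasing[OF True])
    fix x assume "s \<le> x" "x \<le> 1"
    then have x: "x > 0" using \<open>s > 0\<close> by simp
    have "0 \<le> x powr (-p - 1) * (f x * x - p * F x)" using Euler[OF x] by simp
    with has_real_derivative_mult_powr[OF deriv[OF x] x]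
    show "\<exists>y. (h has_real_derivative y) (at x) \<and> 0 \<le> y" unfolding h_def by blast
  qed
  then have "F s * s powr (-p) * s powr p \<le> F 1 * s powr p"
    by (intro mult_right_mono) (auto simp: h_def)
  then show ?thesis using True \<open>s > 0\<close> by (simp add: growth_profile_def powr_minus field_simps)
next
  case False
  define h where "h t = F t * t powr (-q)" for t
  have "h s \<le> h 1"
  proof (rule DERIV_nonpos_imp_nonincreasing[of 1 s h])
    show "1 \<le> s" using False by simp
  next
    fix x assume "1 \<le> x" "x \<le> s"
    then have x: "x > 0" by simp
    have "x powr (-q - 1) * (f x * x - q * F x) \<le> 0"
      using Euler[OF x] by (simp add: mult_nonneg_nonpos)
    with has_real_derivative_mult_powr[OF deriv[OF x] x]
    show "\<exists>y. (h has_real_derivative y) (at x) \<and> y \<le> 0" unfolding h_def by blast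
  qed
  then have "F s * s powr (-q) * s powr q \<le> F 1 * s powr q"
    by (intro mult_right_mono) (auto simp: h_def)
  then show ?thesis using False by (simp add: growth_profile_def powr_minus field_simps)
qed

locale AR_nonlinearity =
  fixes g :: "real \<Rightarrow> real" and \<alpha> \<beta> :: real
  assumes continuous_g: "continuous_on UNIV g"
    and AR: "\<And>s. \<alpha> * Gprim g s \<le> g s * s \<and> g s * s \<le> \<beta> * Gprim g s"
    and exponents: "2 < \<alpha>" "\<alpha> < \<beta>"
begin

lemma Gprim_nonneg: "Gprim g s \<ge> 0"
proof -
  have "0 \<le> (\<beta> - \<alpha>) * Gprim g s" using AR[of s] by (simp add: algebra_simps)
  then show ?thesis using exponents by (simp add: zero_le_mult_iff)
qed

lemma Gtilde_ge_Gprim: "(\<alpha>/2 - 1) * Gprim g s \<le> Gtilde g s"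
  using AR[of s] by (simp add: Gtilde_def field_simps)

lemma Gtilde_le_Gprim: "Gtilde g s \<le> (\<beta>/2 - 1) * Gprim g s"
  using AR[of s] by (simp add: Gtilde_def field_simps)

lemma Gtilde_nonneg: "Gtilde g s \<ge> 0"
proof -
  have "0 \<le> (\<alpha>/2 - 1) * Gprim g s" using exponents Gprim_nonneg[of s] by simp
  then show ?thesis using Gtilde_ge_Gprim[of s] by linarith
qed

lemma Gprim_le_growth_profile: "Gprim g s \<le> max (Gprim g 1) (Gprim g (-1)) * growth_profile \<alpha> \<beta> \<bar>s\<bar>"
proof -
  have G': "(Gprim g has_real_derivative g x) (at x)" for x
    by (rule Gprim_has_real_derivative[OF continuous_g])
  have G'_reflected: "((\<lambda>t. Gprim g (-t)) has_real_derivative - g (-x)) (at x)" for x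
  proof -
    have "((\<lambda>t. Gprim g (-t)) has_real_derivative g (-x) * (-1)) (at x)"
      by (rule DERIV_chain2[where g=uminus and f="Gprim g"]) (use G' in \<open>auto intro!: derivative_eq_intros\<close>)
    then show ?thesis by simp
  qed
  consider "s = 0" | "s > 0" | "s < 0" by linarith
  then show ?thesis
  proof cases
    case 1
    then show ?thesis by (simp add: Gprim_def growth_profile_def zero_ereal_def)
  next
    case 2
    have "Gprim g s \<le> Gprim g 1 * growth_profile \<alpha> \<beta> s"
      by (rule le_growth_profile_of_Euler_ineq[OF G' AR 2])
    also have "\<dots> \<le> max (Gprim g 1) (Gprim g (-1)) * growth_profile \<alpha> \<beta> s"
      by (intro mult_right_mono growth_profile_nonneg) simp
    finally show ?thesis using 2 by simp
  next
    case 3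
    have "Gprim g (- (-s)) \<le> Gprim g (-1) * growth_profile \<alpha> \<beta> (-s)"
    proof (rule le_growth_profile_of_Euler_ineq[OF G'_reflected])
      show "\<alpha> * Gprim g (- t) \<le> - g (- t) * t \<and> - g (- t) * t \<le> \<beta> * Gprim g (- t)" for t
        using AR[of "-t"] by simp
    qed (use 3 in simp)
    also have "\<dots> \<le> max (Gprim g 1) (Gprim g (-1)) * growth_profile \<alpha> \<beta> (-s)"
      by (intro mult_right_mono growth_profile_nonneg) simp
    finally show ?thesis using 3 by simp
  qed
qed

lemma Gtilde_le_growth_profile:
  "Gtilde g s \<le> (\<beta>/2 - 1) * max (Gprim g 1) (Gprim g (-1)) * growth_profile \<alpha> \<beta> \<bar>s\<bar>"
proof -
  have "Gtilde g s \<le> (\<beta>/2 - 1) * Gprim g s" by (rule Gtilde_le_Gprim)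
  also have "\<dots> \<le> (\<beta>/2 - 1) * (max (Gprim g 1) (Gprim g (-1)) * growth_profile \<alpha> \<beta> \<bar>s\<bar>)"
    using exponents by (intro mult_left_mono Gprim_le_growth_profile) auto
  finally show ?thesis by simp
qed

lemma borel_measurable_Gtilde [measurable]: "Gtilde g \<in> borel_measurable borel"
proof -
  have "continuous_on UNIV (Gtilde g)"
    unfolding Gtilde_def[abs_def] using continuous_g continuous_on_Gprim[OF continuous_g]
    by (intro continuous_intros) auto
  then show ?thesis by (rule borel_measurable_continuous_onI)
qed

end

section \<open>Superlevel sets and the Gagliardo seminorm\<close>

definition superlevel :: "('a \<Rightarrow> real) \<Rightarrow> real \<Rightarrow> 'a set" where
  "superlevel u l = {x. l \<le> \<bar>u x\<bar>}"

lemma sets_superlevel: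
  fixes u :: "'a::euclidean_space \<Rightarrow> real"
  assumes "u \<in> borel_measurable lborel"
  shows "superlevel u l \<in> sets lborel"
proof -
  have [measurable]: "u \<in> borel_measurable borel" using assms by simp
  show ?thesis unfolding superlevel_def by measurable
qed

lemma superlevel_antimono: "l \<le> l' \<Longrightarrow> superlevel u l' \<subseteq> superlevel u l"
  by (auto simp: superlevel_def)

lemma emeasure_superlevel_le_integral:
  fixes u :: "'a::euclidean_space \<Rightarrow> real"
  assumes "u \<in> borel_measurable lborel" "integrable lborel (\<lambda>x. u x^2)" "l > 0"
  shows "emeasure lborel (superlevel u l) \<le> ennreal ((\<integral>x. u x^2 \<partial>lborel) / l^2)"
proof -
  have "superlevel u l = {x \<in> space lborel. l^2 \<le> u x^2}"
    using \<open>l > 0\<close> abs_le_square_iff[of l "u x" for x] by (auto simp: superlevel_def)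
  then show ?thesis
    using integral_Markov_inequality[of lborel "\<lambda>x. u x^2" "l^2"] assms by simp
qed

lemma
  fixes u :: "'a::euclidean_space \<Rightarrow> real"
  assumes "u \<in> borel_measurable lborel" "integrable lborel (\<lambda>x. u x^2)" "l > 0"
  shows emeasure_superlevel_finite: "emeasure lborel (superlevel u l) < \<infinity>"
    and measure_superlevel_le_integral: "measure lborel (superlevel u l) \<le> (\<integral>x. u x^2 \<partial>lborel) / l^2"
  using emeasure_superlevel_le_integral[OF assms]
  by (auto simp: measure_def enn2real_leI le_less_trans)

lemma gagliardo_comp_contraction_le:
  fixes u :: "real^'n \<Rightarrow> real" and f :: "real \<Rightarrow> real"
  assumes "\<And>a b. \<bar>f a - f b\<bar> \<le> \<bar>a - b\<bar>"
  shows "gagliardo s (f \<circ> u) \<le> gagliardo s u"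
  unfolding gagliardo_def
proof (rule nn_integral_mono)
  fix z :: "(real^'n) \<times> (real^'n)"
  have "((f \<circ> u) (fst z) - (f \<circ> u) (snd z))^2 \<le> (u (fst z) - u (snd z))^2"
    using assms by (simp add: abs_le_square_iff)
  then show "ennreal (((f \<circ> u) (fst z) - (f \<circ> u) (snd z))^2 / norm (fst z - snd z) powr (real CARD('n) + 2 * s))
      \<le> ennreal ((u (fst z) - u (snd z))^2 / norm (fst z - snd z) powr (real CARD('n) + 2 * s))"
    by (intro ennreal_leI divide_right_mono) auto
qed

lemma gagliardo_ge_emeasure:
  fixes u :: "real^'n \<Rightarrow> real"
  assumes S: "S \<in> sets (lborel \<Otimes>\<^sub>M lborel)"
    and c: "\<And>x y. (x, y) \<in> S \<Longrightarrow> c \<le> (u x - u y)^2 / norm (x - y) powr (real CARD('n) + 2 * s)"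
  shows "ennreal c * emeasure (lborel \<Otimes>\<^sub>M lborel) S \<le> gagliardo s u"
proof -
  have "ennreal c * emeasure (lborel \<Otimes>\<^sub>M lborel) S = (\<integral>\<^sup>+ z. ennreal c * indicator S z \<partial>(lborel \<Otimes>\<^sub>M lborel))"
    by (rule nn_integral_cmult_indicator[OF S, symmetric])
  also have "\<dots> \<le> gagliardo s u"
    unfolding gagliardo_def
  proof (rule nn_integral_mono)
    fix z :: "(real^'n) \<times> (real^'n)"
    show "ennreal c * indicator S z
        \<le> ennreal ((u (fst z) - u (snd z))^2 / norm (fst z - snd z) powr (real CARD('n) + 2 * s))"
      using c[of "fst z" "snd z"] by (cases "z \<in> S") (auto intro: ennreal_leI)
  qed
  finally show ?thesis .
qed

lemma (in sigma_finite_measure) emeasure_pair_ge_of_sections: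
  assumes S: "S \<in> sets (N \<Otimes>\<^sub>M M)" and A: "A \<in> sets N"
    and sections: "\<And>x. x \<in> A \<Longrightarrow> m \<le> emeasure M (Pair x -` S)"
  shows "m * emeasure N A \<le> emeasure (N \<Otimes>\<^sub>M M) S"
proof -
  have "m * emeasure N A = (\<integral>\<^sup>+ x. m * indicator A x \<partial>N)"
    using A by (simp add: nn_integral_cmult_indicator)
  also have "\<dots> \<le> (\<integral>\<^sup>+ x. emeasure M (Pair x -` S) \<partial>N)"
    by (rule nn_integral_mono) (auto simp: indicator_def sections)
  also have "\<dots> = emeasure (N \<Otimes>\<^sub>M M) S"
    by (rule emeasure_pair_measure_alt[OF S, symmetric])
  finally show ?thesis .
qed

lemma mem_cube_iff:
  fixes x y :: "'a::euclidean_space"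
  shows "y \<in> cbox (x - t *\<^sub>R One) (x + t *\<^sub>R One) \<longleftrightarrow> y - x \<in> cbox (- t *\<^sub>R One) (t *\<^sub>R One)"
  by (auto simp: mem_box inner_diff_left inner_add_left algebra_simps)

lemma norm_le_of_mem_cube:
  fixes z :: "'a::euclidean_space" and t :: real
  assumes "z \<in> cbox (- t *\<^sub>R One) (t *\<^sub>R One)"
  shows "norm z \<le> DIM('a) * t"
proof -
  have "norm z \<le> (\<Sum>b\<in>Basis. \<bar>z \<bullet> b\<bar>)" by (rule norm_le_l1)
  also have "\<dots> \<le> (\<Sum>b\<in>(Basis::'a set). t)"
    using assms by (intro sum_mono) (auto simp: mem_box abs_le_iff)
  finally show ?thesis by simp
qed

lemma emeasure_cube:
  fixes x :: "'a::euclidean_space"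
  assumes "t \<ge> 0"
  shows "emeasure lborel (cbox (x - t *\<^sub>R One) (x + t *\<^sub>R One)) = ennreal ((2*t) ^ DIM('a))"
  using assms by (simp add: emeasure_lborel_cbox_eq inner_diff_left inner_add_left algebra_simps prod_constant)

lemma sets_pair_diff_mem:
  fixes A B :: "'a::euclidean_space set"
  assumes "A \<in> sets lborel" "B \<in> sets lborel" "C \<in> sets borel"
  shows "{z. fst z \<in> A \<and> snd z \<in> B \<and> snd z - fst z \<in> C} \<in> sets (lborel \<Otimes>\<^sub>M lborel)"
proof -
  have "{z. fst z \<in> A \<and> snd z \<in> B \<and> snd z - fst z \<in> C}
      = (A \<times> B) \<inter> ((\<lambda>z. snd z - fst z) -` C \<inter> space (lborel \<Otimes>\<^sub>M lborel))"
    by (auto simp: space_pair_measure)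
  also have "\<dots> \<in> sets (lborel \<Otimes>\<^sub>M lborel)"
  proof (rule sets.Int)
    show "A \<times> B \<in> sets (lborel \<Otimes>\<^sub>M lborel)" using assms by (intro pair_measureI)
    have "(\<lambda>z. snd z - fst z) \<in> borel_measurable (lborel \<Otimes>\<^sub>M lborel)" by measurable
    then show "(\<lambda>z. snd z - fst z) -` C \<inter> space (lborel \<Otimes>\<^sub>M lborel) \<in> sets (lborel \<Otimes>\<^sub>M lborel)"
      using assms(3) by (rule measurable_sets)
  qed
  finally show ?thesis .
qed

lemma emeasure_diff_ge_half:
  assumes "A \<in> sets M" "C \<in> sets M"
    and "emeasure M C = ennreal (2 * m)" "emeasure M A = ennreal m" "m \<ge> 0"
  shows "ennreal m \<le> emeasure M (C - A)"
proof -
  have "emeasure M C \<le> emeasure M ((C - A) \<union> A)"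
    using assms by (intro emeasure_mono) auto
  also have "\<dots> \<le> emeasure M (C - A) + emeasure M A"
    using assms by (intro emeasure_subadditive) auto
  finally have "ennreal m + ennreal m \<le> ennreal m + emeasure M (C - A)"
    using assms by (simp add: ennreal_plus[symmetric] add.commute)
  then show ?thesis by (simp add: ennreal_add_left_cancel_le)
qed

text \<open>For \<open>x\<close> above level \<open>l'\<close> and \<open>y\<close> below level \<open>l\<close> the truncation of \<open>u\<close> between \<open>l\<close> and
  \<open>l'\<close> jumps by \<open>l' - l\<close>; if moreover \<open>y\<close> lies in a small cube around \<open>x\<close>, this pair contributes
  at least a fixed amount to the Gagliardo seminorm.\<close>
definition level_pairs :: "('a::euclidean_space \<Rightarrow> real) \<Rightarrow> real \<Rightarrow> real \<Rightarrow> real \<Rightarrow> ('a \<times> 'a) set" where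
  "level_pairs u l l' t = {z. fst z \<in> superlevel u l' \<and> snd z \<in> UNIV - superlevel u l
                               \<and> snd z - fst z \<in> cbox (- t *\<^sub>R One) (t *\<^sub>R One)}"

lemma sets_level_pairs:
  fixes u :: "'a::euclidean_space \<Rightarrow> real"
  assumes "u \<in> borel_measurable lborel"
  shows "level_pairs u l l' t \<in> sets (lborel \<Otimes>\<^sub>M lborel)"
  unfolding level_pairs_def
  by (intro sets_pair_diff_mem sets.Diff sets_superlevel[OF assms] borel_closed) auto

lemma emeasure_level_pairs_ge:
  fixes u :: "'a::euclidean_space \<Rightarrow> real"
  assumes u: "u \<in> borel_measurable lborel" and "t > 0"
    and M: "emeasure lborel (superlevel u l) = ennreal M" "(2 * t) ^ DIM('a) = 2 * M"
  shows "ennreal M * emeasure lborel (superlevel u l') \<le> emeasure (lborel \<Otimes>\<^sub>M lborel) (level_pairs u l l' t)"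
proof (rule lborel.emeasure_pair_ge_of_sections[OF sets_level_pairs[OF u] sets_superlevel[OF u]])
  fix x assume "x \<in> superlevel u l'"
  define C where "C = cbox (x - t *\<^sub>R One) (x + t *\<^sub>R One)"
  have "Pair x -` level_pairs u l l' t = C - superlevel u l"
    using \<open>x \<in> superlevel u l'\<close> by (auto simp: level_pairs_def C_def mem_cube_iff)
  moreover have "0 \<le> (2 * t) ^ DIM('a)" using \<open>t > 0\<close> by simp
  then have "M \<ge> 0" using M(2) by simp
  then have "ennreal M \<le> emeasure lborel (C - superlevel u l)"
    using \<open>t > 0\<close> M by (intro emeasure_diff_ge_half sets_superlevel[OF u]) (auto simp: C_def emeasure_cube)
  ultimately show "ennreal M \<le> emeasure lborel (Pair x -` level_pairs u l l' t)" by simp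
qed

lemma gagliardo_ge_level_pairs:
  fixes u :: "real^'n \<Rightarrow> real"
  defines "d \<equiv> real CARD('n)"
  assumes u: "u \<in> borel_measurable lborel" and "s > 0" "t > 0" "0 < l" "l < l'"
  shows "ennreal ((l' - l)^2 / (d * t) powr (d + 2 * s)) * emeasure (lborel \<Otimes>\<^sub>M lborel) (level_pairs u l l' t)
           \<le> gagliardo s u"
proof -
  define h where "h = l' - l"
  define v where "v = (\<lambda>r. min (max (\<bar>r\<bar> - l) 0) h) \<circ> u"
  have "h^2 / (d * t) powr (d + 2 * s) \<le> (v x - v y)^2 / norm (x - y) powr (real CARD('n) + 2 * s)"
    if "(x, y) \<in> level_pairs u l l' t" for x y
  proof -
    have x: "l' \<le> \<bar>u x\<bar>" and y: "\<bar>u y\<bar> < l" and xy: "y - x \<in> cbox (- t *\<^sub>R One) (t *\<^sub>R One)"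
      using that by (auto simp: level_pairs_def superlevel_def)
    have "v x = h" "v y = 0" "x \<noteq> y" using x y \<open>l < l'\<close> by (auto simp: v_def h_def)
    have "norm (x - y) \<le> d * t"
      using norm_le_of_mem_cube[OF xy] by (simp add: d_def norm_minus_commute)
    then have "norm (x - y) powr (d + 2 * s) \<le> (d * t) powr (d + 2 * s)"
      using \<open>s > 0\<close> by (intro powr_mono2) (auto simp: d_def)
    then have "h^2 / (d * t) powr (d + 2 * s) \<le> h^2 / norm (x - y) powr (d + 2 * s)"
      using \<open>x \<noteq> y\<close> \<open>t > 0\<close> by (intro divide_left_mono) (auto simp: d_def)
    then show ?thesis using \<open>v x = h\<close> \<open>v y = 0\<close> by (simp add: d_def)
  qed
  then have "ennreal (h^2 / (d * t) powr (d + 2 * s)) * emeasure (lborel \<Otimes>\<^sub>M lborel) (level_pairs u l l' t)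
      \<le> gagliardo s v"
    by (intro gagliardo_ge_emeasure[OF sets_level_pairs[OF u]]) auto
  also have "\<dots> \<le> gagliardo s u"
    unfolding v_def by (rule gagliardo_comp_contraction_le) (auto simp: min_def max_def abs_if)
  finally show ?thesis by (simp add: h_def)
qed

lemma cube_side_powr:
  fixes M d s :: real
  assumes "M > 0" "d > 0"
  defines "t \<equiv> (2 * M) powr (1/d) / 2"
  shows "(2 * t) powr d = 2 * M"
    and "(d * t) powr (d + 2 * s) = (d * 2 powr (1/d) / 2) powr (d + 2 * s) * M * M powr (2 * s / d)"
proof -
  show "(2 * t) powr d = 2 * M" using assms by (simp add: t_def powr_powr)
  have "d * t = (d * 2 powr (1/d) / 2) * M powr (1/d)"
    using assms by (simp add: t_def powr_mult)
  then have "(d * t) powr (d + 2 * s) = (d * 2 powr (1/d) / 2) powr (d + 2 * s) * (M powr (1/d)) powr (d + 2 * s)"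
    by (simp only: powr_mult)
  also have "(M powr (1/d)) powr (d + 2 * s) = M * M powr (2 * s / d)"
    using assms by (simp add: powr_powr powr_add field_simps)
  finally show "(d * t) powr (d + 2 * s) = (d * 2 powr (1/d) / 2) powr (d + 2 * s) * M * M powr (2 * s / d)"
    by simp
qed

text \<open>The cube is chosen to have twice the measure of \<open>{|u| \<ge> l}\<close>, so that at least half of it lies
  below level \<open>l\<close>.\<close>
lemma measure_superlevel_le_gagliardo:
  fixes u :: "real^'n \<Rightarrow> real"
  defines "d \<equiv> real CARD('n)"
  assumes u: "u \<in> borel_measurable lborel" and s: "s > 0" and l: "0 < l" "l < l'"
    and fin: "emeasure lborel (superlevel u l) < \<infinity>" and gfin: "gagliardo s u < \<infinity>"
  shows "measure lborel (superlevel u l') \<le> (d * 2 powr (1/d) / 2) powr (d + 2 * s)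
           * measure lborel (superlevel u l) powr (2 * s/d) * enn2real (gagliardo s u) / (l' - l)^2"
proof -
  define M where "M = measure lborel (superlevel u l)"
  define M' where "M' = measure lborel (superlevel u l')"
  define B where "B = enn2real (gagliardo s u)"
  define K where "K = (d * 2 powr (1/d) / 2) powr (d + 2 * s)"
  have "d > 0" "K > 0" by (simp_all add: d_def K_def)
  have eM: "emeasure lborel (superlevel u l) = ennreal M"
    unfolding M_def using fin by (intro emeasure_eq_ennreal_measure) (auto simp: top_unique)
  have le: "emeasure lborel (superlevel u l') \<le> ennreal M"
    using emeasure_mono[OF superlevel_antimono[of l l'] sets_superlevel[OF u]] l eM by simp
  then have eM': "emeasure lborel (superlevel u l') = ennreal M'"
    unfolding M'_def by (intro emeasure_eq_ennreal_measure) (auto simp: top_unique)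
  have "M' \<le> M" "M' \<ge> 0" using le eM' by (simp_all add: M_def M'_def)
  show ?thesis
  proof (cases "M = 0")
    case True
    then have "M' = 0" using \<open>M' \<le> M\<close> \<open>M' \<ge> 0\<close> by simp
    with True show ?thesis unfolding M_def[symmetric] M'_def[symmetric] by simp
  next
    case False
    then have "M > 0" by (simp add: M_def order_less_le)
    define t where "t = (2 * M) powr (1/d) / 2"
    have "t > 0" using \<open>M > 0\<close> by (simp add: t_def)
    have "(2 * t) ^ DIM(real^'n) = 2 * M"
      using cube_side_powr(1)[OF \<open>M > 0\<close> \<open>d > 0\<close>] \<open>t > 0\<close> by (simp add: t_def d_def powr_realpow)
    from emeasure_level_pairs_ge[OF u \<open>t > 0\<close> eM this, of l']
    have "ennreal M * ennreal M' \<le> emeasure (lborel \<Otimes>\<^sub>M lborel) (level_pairs u l l' t)"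
      by (simp add: eM')
    moreover have "ennreal (M * M') = ennreal M * ennreal M'" using \<open>M > 0\<close> \<open>M' \<ge> 0\<close> by (simp add: ennreal_mult)
    ultimately have "ennreal ((l' - l)^2 / (d * t) powr (d + 2 * s)) * ennreal (M * M')
        \<le> ennreal ((l' - l)^2 / (d * t) powr (d + 2 * s)) * emeasure (lborel \<Otimes>\<^sub>M lborel) (level_pairs u l l' t)"
      by (simp add: mult_left_mono)
    also have "\<dots> \<le> gagliardo s u"
      by (rule gagliardo_ge_level_pairs[OF u s \<open>t > 0\<close> l, folded d_def])
    also have "\<dots> = ennreal B" using gfin by (simp add: B_def less_top ennreal_enn2real)
    finally have main: "(l' - l)^2 / (d * t) powr (d + 2 * s) * (M * M') \<le> B"
      using \<open>M > 0\<close> \<open>M' \<ge> 0\<close> \<open>t > 0\<close> \<open>d > 0\<close> by (simp add: B_def ennreal_mult[symmetric] ennreal_le_iff)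
    have "(d * t) powr (d + 2 * s) = K * M * M powr (2 * s / d)"
      using cube_side_powr(2)[OF \<open>M > 0\<close> \<open>d > 0\<close>] by (simp add: t_def K_def)
    with main have "M' \<le> K * M powr (2 * s / d) * B / (l' - l)^2"
      using \<open>M > 0\<close> \<open>K > 0\<close> l by (simp add: field_simps)
    then show ?thesis by (simp add: M_def M'_def B_def K_def)
  qed
qed

section \<open>Iterating the level-doubling estimate\<close>

text \<open>The two estimates available for \<open>\<mu> l = |{|u| \<ge> l}|\<close>: Chebyshev's inequality with
  \<open>a = |u|\<^sub>2\<^sup>2\<close>, and the doubling estimate above with \<open>B = |\<nabla>\<^sub>s u|\<^sub>2\<^sup>2\<close> and \<open>\<gamma> = 2s/d\<close>.\<close>
definition dyadic_decay :: "real \<Rightarrow> real \<Rightarrow> real \<Rightarrow> real \<Rightarrow> (real \<Rightarrow> real) \<Rightarrow> bool" where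
  "dyadic_decay a K \<gamma> B \<mu> \<longleftrightarrow>
     (\<forall>l>0. 0 \<le> \<mu> l \<and> \<mu> l \<le> a / l^2 \<and> \<mu> (2 * l) \<le> K * \<mu> l powr \<gamma> * B / l^2)"

fun decay_exp :: "real \<Rightarrow> nat \<Rightarrow> real" where
  "decay_exp \<gamma> 0 = 2"
| "decay_exp \<gamma> (Suc j) = 2 + \<gamma> * decay_exp \<gamma> j"

fun decay_pow :: "real \<Rightarrow> nat \<Rightarrow> real" where
  "decay_pow \<gamma> 0 = 0"
| "decay_pow \<gamma> (Suc j) = 1 + \<gamma> * decay_pow \<gamma> j"

fun decay_coeff :: "real \<Rightarrow> real \<Rightarrow> real \<Rightarrow> nat \<Rightarrow> real" where
  "decay_coeff a K \<gamma> 0 = a"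
| "decay_coeff a K \<gamma> (Suc j) = K * decay_coeff a K \<gamma> j powr \<gamma> * 2 powr (\<gamma> * decay_exp \<gamma> j + 2)"

lemma decay_coeff_pos: "a > 0 \<Longrightarrow> K > 0 \<Longrightarrow> decay_coeff a K \<gamma> j > 0"
  by (induction j) auto

lemma decay_pow_nonneg: "\<gamma> \<ge> 0 \<Longrightarrow> decay_pow \<gamma> j \<ge> 0"
  by (induction j) auto

lemma decay_pow_ge:
  assumes "\<gamma> > 0" "j \<ge> 2"
  shows "decay_pow \<gamma> j \<ge> 1 + \<gamma>"
proof -
  obtain k where k: "j = Suc (Suc k)" using assms(2) by (metis add_2_eq_Suc le_Suc_ex)
  have "0 \<le> \<gamma> * (\<gamma> * decay_pow \<gamma> k)" using decay_pow_nonneg[of \<gamma> k] assms(1) by simp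
  then show ?thesis by (simp add: k algebra_simps)
qed

lemma decay_exp_eq:
  assumes "\<gamma> \<noteq> 1"
  shows "decay_exp \<gamma> j = 2 / (1 - \<gamma>) - \<gamma> ^ j * (2 / (1 - \<gamma>) - 2)"
proof (induction j)
  case (Suc j)
  have "decay_exp \<gamma> (Suc j) = 2 + \<gamma> * (2 / (1 - \<gamma>) - \<gamma> ^ j * (2 / (1 - \<gamma>) - 2))"
    using Suc.IH by simp
  also have "\<dots> = (2 + \<gamma> * (2 / (1 - \<gamma>))) - \<gamma> ^ Suc j * (2 / (1 - \<gamma>) - 2)"
    by (simp add: algebra_simps)
  also have "2 + \<gamma> * (2 / (1 - \<gamma>)) = 2 / (1 - \<gamma>)"
    using assms by (simp add: field_simps)
  finally show ?case .
qed simp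

lemma decay_exp_ge_linear: "\<gamma> \<ge> 1 \<Longrightarrow> decay_exp \<gamma> j \<ge> 2 + 2 * real j"
proof (induction j)
  case (Suc j)
  have "1 * decay_exp \<gamma> j \<le> \<gamma> * decay_exp \<gamma> j"
    using Suc by (intro mult_right_mono) auto
  then have "2 + 2 * real j \<le> \<gamma> * decay_exp \<gamma> j" using Suc by linarith
  then show ?case by simp
qed simp

text \<open>The exponents \<open>decay_exp \<gamma> j\<close> increase to \<open>2 / (1 - \<gamma>)\<close> if \<open>\<gamma> < 1\<close> and to \<open>\<infinity>\<close> otherwise.\<close>
lemma decay_exp_exceeds:
  assumes "\<gamma> > 0" and "\<beta> * (1 - \<gamma>) < 2"
  obtains J where "J \<ge> 2" "\<beta> < decay_exp \<gamma> J"
proof (cases "\<gamma> \<ge> 1")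
  case True
  define J where "J = nat \<lceil>\<beta>\<rceil> + 2"
  have "\<beta> \<le> real J" unfolding J_def by linarith
  then have "\<beta> < decay_exp \<gamma> J" using decay_exp_ge_linear[OF True, of J] by linarith
  moreover have "J \<ge> 2" by (simp add: J_def)
  ultimately show ?thesis using that by blast
next
  case False
  define E where "E = 2 / (1 - \<gamma>)"
  have "\<beta> < E" using assms(2) False by (simp add: E_def pos_less_divide_eq)
  have "E - 2 > 0" using assms(1) False by (simp add: E_def field_simps)
  with \<open>\<beta> < E\<close> obtain n where n: "\<gamma> ^ n < (E - \<beta>) / (E - 2)"
    using real_arch_pow_inv[of "(E - \<beta>) / (E - 2)" \<gamma>] False assms(1) by auto
  have "\<gamma> ^ (n + 2) \<le> \<gamma> ^ n" using assms(1) False by (intro power_decreasing) auto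
  then have "\<gamma> ^ (n + 2) * (E - 2) < E - \<beta>"
    using n \<open>E - 2 > 0\<close> by (smt (verit) mult_right_mono pos_less_divide_eq)
  then have "\<beta> < decay_exp \<gamma> (n + 2)" using decay_exp_eq[of \<gamma> "n + 2"] False by (simp add: E_def)
  moreover have "n + 2 \<ge> 2" by simp
  ultimately show ?thesis using that by blast
qed

lemma decay_iterate:
  fixes \<mu> :: "real \<Rightarrow> real"
  assumes decay: "dyadic_decay a K \<gamma> B \<mu>" and a: "a > 0" and K: "K > 0" and g: "\<gamma> > 0" and B: "B > 0"
  shows "l > 0 \<Longrightarrow> \<mu> l \<le> decay_coeff a K \<gamma> j * B powr decay_pow \<gamma> j * l powr (- decay_exp \<gamma> j)"
proof (induction j arbitrary: l)
  case 0
  then show ?case using decay B by (simp add: dyadic_decay_def powr_minus powr_realpow divide_simps)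
next
  case (Suc j)
  define c where "c = decay_coeff a K \<gamma> j"
  define e where "e = decay_exp \<gamma> j"
  define p where "p = decay_pow \<gamma> j"
  have c0: "c > 0" using decay_coeff_pos a K by (simp add: c_def)
  have l2: "l/2 > 0" using Suc by simp
  have "\<mu> l = \<mu> (2 * (l/2))" by simp
  also have "\<dots> \<le> K * \<mu> (l/2) powr \<gamma> * B / (l/2)^2" using decay l2 unfolding dyadic_decay_def by blast
  also have "\<dots> \<le> K * (c * B powr p * (l/2) powr (- e)) powr \<gamma> * B / (l/2)^2"
  proof -
    have "\<mu> (l/2) powr \<gamma> \<le> (c * B powr p * (l/2) powr (- e)) powr \<gamma>"
      using g decay l2 Suc.IH[OF l2] by (intro powr_mono2) (auto simp: c_def e_def p_def dyadic_decay_def)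
    then show ?thesis using K B l2 by (intro divide_right_mono mult_right_mono mult_left_mono) auto
  qed
  also have "\<dots> = K * c powr \<gamma> * 2 powr (\<gamma> * e + 2) * B powr (1 + \<gamma> * p) * l powr (- (2 + \<gamma> * e))"
  proof -
    have "(c * B powr p * (l/2) powr (- e)) powr \<gamma> = c powr \<gamma> * B powr (\<gamma> * p) * (l/2) powr (- (\<gamma> * e))"
      using c0 B l2 by (simp add: powr_mult powr_powr mult.commute)
    moreover have "(l/2) powr (- (\<gamma> * e)) = l powr (- (\<gamma> * e)) * 2 powr (\<gamma> * e)"
      using Suc.prems by (simp add: powr_divide powr_minus divide_simps)
    moreover have "l powr (-2) = 1 / l^2"
      using Suc.prems by (simp add: powr_minus powr_realpow divide_simps)
    moreover have "B powr (1 + \<gamma> * p) = B * B powr (\<gamma> * p)" using B by (simp add: powr_add)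
    moreover have "l powr (- (2 + \<gamma> * e)) = l powr (-2) * l powr (- (\<gamma> * e))"
      by (simp add: powr_add[symmetric])
    moreover have "2 powr (\<gamma> * e + 2) = 2 powr (\<gamma> * e) * 2 powr 2" by (simp add: powr_add)
    ultimately show ?thesis by (simp add: field_simps)
  qed
  finally show ?case by (simp add: c_def e_def p_def)
qed

lemma dyadic_decay_zero:
  assumes "dyadic_decay a K \<gamma> 0 \<mu>" "l > 0"
  shows "\<mu> l = 0"
proof -
  have "\<mu> (2 * (l/2)) \<le> 0" "0 \<le> \<mu> (2 * (l/2))"
    using assms unfolding dyadic_decay_def by (auto simp del: times_divide_eq_right)
  then show ?thesis by simp
qed

lemma suminf_ennreal_le_geometric:
  fixes x :: "nat \<Rightarrow> real"
  assumes "0 \<le> A" "0 \<le> q" "q < 1" "\<And>n. x n \<le> A * q ^ n"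
  shows "(\<Sum>n. ennreal (x n)) \<le> ennreal (A / (1 - q))"
proof -
  have "(\<Sum>n. ennreal (x n)) \<le> (\<Sum>n. ennreal (A * q ^ n))"
    by (rule suminf_le) (auto intro: ennreal_leI assms)
  also have "\<dots> = ennreal (\<Sum>n. A * q ^ n)"
    by (rule suminf_ennreal2) (use assms in \<open>auto intro: summable_mult summable_geometric\<close>)
  also have "(\<Sum>n. A * q ^ n) = A / (1 - q)"
    using assms by (simp add: suminf_mult suminf_geometric summable_geometric)
  finally show ?thesis .
qed

lemma le_powr_interpolate:
  fixes x y1 y2 t :: real
  assumes "0 \<le> x" "x \<le> y1" "x \<le> y2" "0 \<le> t" "t \<le> 1"
  shows "x \<le> y1 powr (1 - t) * y2 powr t"
proof (cases "x = 0")
  case False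
  then have "x = x powr (1 - t) * x powr t" using assms by (simp add: powr_add[symmetric])
  also have "\<dots> \<le> y1 powr (1 - t) * y2 powr t"
    by (intro mult_mono powr_mono2) (use assms in auto)
  finally show ?thesis .
qed simp

lemma two_powr_less_one: "x < 0 \<Longrightarrow> (2::real) powr x < 1"
  using powr_less_mono[of x 0 2] by simp

lemma dyadic_sum_large_levels:
  assumes decay: "dyadic_decay a K \<gamma> B \<mu>" and "a > 0" "K > 0" "\<gamma> > 0" "B > 0" "B \<le> 1"
    and J: "\<beta> < decay_exp \<gamma> J" "\<theta> \<le> decay_pow \<gamma> J"
  shows "(\<Sum>n. ennreal (2 powr ((real n + 1) * \<beta>) * \<mu> (2 powr real n)))
    \<le> ennreal (decay_coeff a K \<gamma> J * 2 powr \<beta> / (1 - 2 powr (\<beta> - decay_exp \<gamma> J)) * B powr \<theta>)"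
proof -
  have "(\<Sum>n. ennreal (2 powr ((real n + 1) * \<beta>) * \<mu> (2 powr real n)))
    \<le> ennreal (decay_coeff a K \<gamma> J * 2 powr \<beta> * B powr \<theta> / (1 - 2 powr (\<beta> - decay_exp \<gamma> J)))"
  proof (rule suminf_ennreal_le_geometric)
    define c where "c = decay_coeff a K \<gamma> J"
    have "c > 0" using decay_coeff_pos assms by (simp add: c_def)
    then show "0 \<le> decay_coeff a K \<gamma> J * 2 powr \<beta> * B powr \<theta>" by (simp add: c_def)
    show "0 \<le> 2 powr (\<beta> - decay_exp \<gamma> J)" "2 powr (\<beta> - decay_exp \<gamma> J) < 1"
      using J by (auto intro: two_powr_less_one)
    fix n :: nat
    have "2 powr ((real n + 1) * \<beta>) * \<mu> (2 powr real n)
        \<le> 2 powr ((real n + 1) * \<beta>) * (c * B powr decay_pow \<gamma> J * (2 powr real n) powr (- decay_exp \<gamma> J))"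
      using decay_iterate[OF decay assms(2-5)] by (intro mult_left_mono) (auto simp: c_def)
    also have "\<dots> = c * 2 powr \<beta> * B powr decay_pow \<gamma> J * (2 powr (\<beta> - decay_exp \<gamma> J)) ^ n"
      by (simp add: powr_power powr_powr powr_add[symmetric] algebra_simps)
    also have "\<dots> \<le> c * 2 powr \<beta> * B powr \<theta> * (2 powr (\<beta> - decay_exp \<gamma> J)) ^ n"
      using J \<open>B > 0\<close> \<open>B \<le> 1\<close> \<open>c > 0\<close> by (intro mult_right_mono mult_left_mono powr_mono') auto
    finally show "2 powr ((real n + 1) * \<beta>) * \<mu> (2 powr real n)
        \<le> decay_coeff a K \<gamma> J * 2 powr \<beta> * B powr \<theta> * (2 powr (\<beta> - decay_exp \<gamma> J)) ^ n"
      by (simp add: c_def)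
  qed
  then show ?thesis by simp
qed

text \<open>Below level 1 a single exponent \<open>decay_exp \<gamma> j\<close> is either too weak in \<open>B\<close> (\<open>j = 1\<close>) or
  too singular in \<open>l\<close> (\<open>j \<ge> 2\<close>); interpolating between \<open>j = 1\<close> and \<open>j = 2\<close> gains a power of \<open>B\<close>
  above 1 at a cost in \<open>l\<close> that stays below \<open>\<alpha>\<close>.\<close>
lemma decay_interpolate:
  assumes decay: "dyadic_decay a K \<gamma> B \<mu>" and "a > 0" "K > 0" "\<gamma> > 0" "B > 0" "l > 0"
    and "0 \<le> \<tau>" "\<tau> \<le> 1"
  shows "\<mu> l \<le> decay_coeff a K \<gamma> 1 powr (1 - \<tau>) * decay_coeff a K \<gamma> 2 powr \<tau>
                * B powr (1 + \<tau> * \<gamma>) * l powr (- (2 + 2 * \<gamma> + 2 * \<tau> * \<gamma>^2))"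
proof -
  define c1 where "c1 = decay_coeff a K \<gamma> 1"
  define c2 where "c2 = decay_coeff a K \<gamma> 2"
  have "c1 > 0" "c2 > 0" using decay_coeff_pos assms by (auto simp: c1_def c2_def)
  have b1: "\<mu> l \<le> c1 * B powr 1 * l powr (- (2 + 2 * \<gamma>))"
    using decay_iterate[OF assms(1-6), of 1] by (simp add: c1_def mult.commute)
  have b2: "\<mu> l \<le> c2 * B powr (1 + \<gamma>) * l powr (- (2 + 2 * \<gamma> + 2 * \<gamma>^2))"
    using decay_iterate[OF assms(1-6), of 2]
    by (simp add: c2_def numeral_2_eq_2 power2_eq_square algebra_simps)
  have "0 \<le> \<mu> l" using decay \<open>l > 0\<close> by (simp add: dyadic_decay_def)
  then have "\<mu> l \<le> (c1 * B powr 1 * l powr (- (2 + 2 * \<gamma>))) powr (1 - \<tau>)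
                * (c2 * B powr (1 + \<gamma>) * l powr (- (2 + 2 * \<gamma> + 2 * \<gamma>^2))) powr \<tau>"
    by (rule le_powr_interpolate[OF _ b1 b2]) (use assms in auto)
  also have "\<dots> = c1 powr (1 - \<tau>) * c2 powr \<tau> * B powr (1 + \<tau> * \<gamma>) * l powr (- (2 + 2 * \<gamma> + 2 * \<tau> * \<gamma>^2))"
    using \<open>c1 > 0\<close> \<open>c2 > 0\<close> \<open>B > 0\<close> \<open>l > 0\<close>
    by (simp add: powr_def ln_mult exp_add[symmetric] algebra_simps power2_eq_square)
  finally show ?thesis by (simp add: c1_def c2_def)
qed

lemma dyadic_sum_small_levels:
  assumes decay: "dyadic_decay a K \<gamma> B \<mu>" and "a > 0" "K > 0" "\<gamma> > 0" "B > 0"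
    and "0 \<le> \<tau>" "\<tau> \<le> 1" and E: "E = 2 + 2 * \<gamma> + 2 * \<tau> * \<gamma>^2" "E < \<alpha>"
  shows "(\<Sum>n. ennreal (2 powr (- (real n * \<alpha>)) * \<mu> (2 powr (- (real n + 1)))))
    \<le> ennreal (decay_coeff a K \<gamma> 1 powr (1 - \<tau>) * decay_coeff a K \<gamma> 2 powr \<tau> * 2 powr E
                / (1 - 2 powr (E - \<alpha>)) * B powr (1 + \<tau> * \<gamma>))"
proof -
  have "(\<Sum>n. ennreal (2 powr (- (real n * \<alpha>)) * \<mu> (2 powr (- (real n + 1)))))
    \<le> ennreal (decay_coeff a K \<gamma> 1 powr (1 - \<tau>) * decay_coeff a K \<gamma> 2 powr \<tau> * 2 powr E
                * B powr (1 + \<tau> * \<gamma>) / (1 - 2 powr (E - \<alpha>)))"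
  proof (rule suminf_ennreal_le_geometric)
    define c where "c = decay_coeff a K \<gamma> 1 powr (1 - \<tau>) * decay_coeff a K \<gamma> 2 powr \<tau>"
    have "decay_coeff a K \<gamma> 1 > 0" "decay_coeff a K \<gamma> 2 > 0" using decay_coeff_pos assms by blast+
    then have "c > 0" unfolding c_def by (metis mult_pos_pos powr_gt_zero less_irrefl)
    then show "0 \<le> decay_coeff a K \<gamma> 1 powr (1 - \<tau>) * decay_coeff a K \<gamma> 2 powr \<tau> * 2 powr E * B powr (1 + \<tau> * \<gamma>)"
      by (simp add: c_def)
    show "0 \<le> 2 powr (E - \<alpha>)" "2 powr (E - \<alpha>) < 1"
      using E by (auto intro: two_powr_less_one)
    fix n :: nat
    have "2 powr (- (real n * \<alpha>)) * \<mu> (2 powr (- (real n + 1)))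
        \<le> 2 powr (- (real n * \<alpha>)) * (c * B powr (1 + \<tau> * \<gamma>) * (2 powr (- (real n + 1))) powr (- E))"
      using decay_interpolate[OF assms(1-5) _ assms(6,7)] by (intro mult_left_mono) (auto simp: c_def E)
    also have "\<dots> = c * 2 powr E * B powr (1 + \<tau> * \<gamma>) * (2 powr (E - \<alpha>)) ^ n"
      by (simp add: powr_power powr_powr powr_add[symmetric] algebra_simps)
    finally show "2 powr (- (real n * \<alpha>)) * \<mu> (2 powr (- (real n + 1)))
        \<le> decay_coeff a K \<gamma> 1 powr (1 - \<tau>) * decay_coeff a K \<gamma> 2 powr \<tau> * 2 powr E
           * B powr (1 + \<tau> * \<gamma>) * (2 powr (E - \<alpha>)) ^ n"
      by (simp add: c_def)
  qed
  then show ?thesis by simp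
qed

lemma dyadic_sums_le_powr:
  assumes "a > 0" "K > 0" "\<gamma> > 0" "2 + 2 * \<gamma> < \<alpha>" "\<beta> * (1 - \<gamma>) < 2"
  obtains \<theta> C where "\<theta> > 1" "C \<ge> 0"
    "\<And>\<mu> B. dyadic_decay a K \<gamma> B \<mu> \<Longrightarrow> 0 < B \<Longrightarrow> B \<le> 1 \<Longrightarrow>
       (\<Sum>n. ennreal (2 powr ((real n + 1) * \<beta>) * \<mu> (2 powr real n)))
       + (\<Sum>n. ennreal (2 powr (- (real n * \<alpha>)) * \<mu> (2 powr (- (real n + 1)))))
       \<le> ennreal (C * B powr \<theta>)"
proof -
  obtain J where J: "J \<ge> 2" "\<beta> < decay_exp \<gamma> J" using decay_exp_exceeds assms(3,5) by blast
  define \<tau> where "\<tau> = min 1 ((\<alpha> - (2 + 2 * \<gamma>)) / (4 * \<gamma>^2))"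
  have \<tau>: "0 < \<tau>" "\<tau> \<le> 1" using assms(3,4) by (auto simp: \<tau>_def)
  define E where "E = 2 + 2 * \<gamma> + 2 * \<tau> * \<gamma>^2"
  have "\<tau> \<le> (\<alpha> - (2 + 2 * \<gamma>)) / (4 * \<gamma>^2)" by (simp add: \<tau>_def)
  then have "\<tau> * (4 * \<gamma>^2) \<le> \<alpha> - (2 + 2 * \<gamma>)" using assms(3) by (simp add: pos_le_divide_eq)
  moreover have "\<tau> * (2 * \<gamma>^2) < \<tau> * (4 * \<gamma>^2)" using \<tau> assms(3) by simp
  ultimately have "E < \<alpha>" by (simp add: E_def)
  define \<theta> where "\<theta> = 1 + \<tau> * \<gamma>"
  have "\<tau> * \<gamma> \<le> \<gamma>" using \<tau> assms(3) by (simp add: mult_le_cancel_right1)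
  then have "\<theta> \<le> decay_pow \<gamma> J" using decay_pow_ge[OF assms(3) J(1)] by (simp add: \<theta>_def)
  define C1 where "C1 = decay_coeff a K \<gamma> J * 2 powr \<beta> / (1 - 2 powr (\<beta> - decay_exp \<gamma> J))"
  define C2 where "C2 = decay_coeff a K \<gamma> 1 powr (1 - \<tau>) * decay_coeff a K \<gamma> 2 powr \<tau> * 2 powr E
                         / (1 - 2 powr (E - \<alpha>))"
  have "2 powr (\<beta> - decay_exp \<gamma> J) < 1" "2 powr (E - \<alpha>) < 1"
    using J(2) \<open>E < \<alpha>\<close> by (auto intro: two_powr_less_one)
  moreover have "decay_coeff a K \<gamma> J > 0" using decay_coeff_pos[OF assms(1,2)] .
  ultimately have "C1 \<ge> 0" "C2 \<ge> 0" by (simp_all add: C1_def C2_def)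
  show ?thesis
  proof (rule that)
    show "\<theta> > 1" using \<tau> assms(3) by (simp add: \<theta>_def)
    show "C1 + C2 \<ge> 0" using \<open>C1 \<ge> 0\<close> \<open>C2 \<ge> 0\<close> by simp
    fix \<mu> B assume decay: "dyadic_decay a K \<gamma> B \<mu>" and "0 < B" "B \<le> 1"
    have "(\<Sum>n. ennreal (2 powr ((real n + 1) * \<beta>) * \<mu> (2 powr real n))) \<le> ennreal (C1 * B powr \<theta>)"
      unfolding C1_def
      by (rule dyadic_sum_large_levels[OF decay assms(1-3) \<open>0 < B\<close> \<open>B \<le> 1\<close> J(2) \<open>\<theta> \<le> decay_pow \<gamma> J\<close>])
    moreover have "(\<Sum>n. ennreal (2 powr (- (real n * \<alpha>)) * \<mu> (2 powr (- (real n + 1)))))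
        \<le> ennreal (C2 * B powr \<theta>)"
      unfolding C2_def \<theta>_def
      by (rule dyadic_sum_small_levels[OF decay assms(1-3) \<open>0 < B\<close> less_imp_le[OF \<tau>(1)] \<tau>(2) E_def \<open>E < \<alpha>\<close>])
    ultimately have "(\<Sum>n. ennreal (2 powr ((real n + 1) * \<beta>) * \<mu> (2 powr real n)))
       + (\<Sum>n. ennreal (2 powr (- (real n * \<alpha>)) * \<mu> (2 powr (- (real n + 1)))))
       \<le> ennreal (C1 * B powr \<theta>) + ennreal (C2 * B powr \<theta>)"
      by (rule add_mono)
    also have "\<dots> = ennreal (C1 * B powr \<theta> + C2 * B powr \<theta>)"
      using \<open>C1 \<ge> 0\<close> \<open>C2 \<ge> 0\<close> by (intro ennreal_plus[symmetric]) simp_all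
    also have "\<dots> = ennreal ((C1 + C2) * B powr \<theta>)" by (simp add: distrib_right)
    finally show "(\<Sum>n. ennreal (2 powr ((real n + 1) * \<beta>) * \<mu> (2 powr real n)))
       + (\<Sum>n. ennreal (2 powr (- (real n * \<alpha>)) * \<mu> (2 powr (- (real n + 1)))))
       \<le> ennreal ((C1 + C2) * B powr \<theta>)" .
  qed
qed

section \<open>An interpolation inequality\<close>

lemma term_le_suminf_ennreal: "(f k :: ennreal) \<le> (\<Sum>n. f n)"
  using sum_le_suminf[of f "{k}"] by simp

lemma dyadic_bracket:
  fixes r :: real
  assumes "r > 0"
  obtains k :: int where "2 powr k \<le> r" "r \<le> 2 powr (k + 1)"
proof
  have "2 powr \<lfloor>log 2 r\<rfloor> \<le> 2 powr log 2 r" by (simp add: of_int_floor_le)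
  then show "2 powr \<lfloor>log 2 r\<rfloor> \<le> r" using assms by simp
  have "2 powr log 2 r \<le> 2 powr (\<lfloor>log 2 r\<rfloor> + 1)" by (simp add: less_imp_le)
  then show "r \<le> 2 powr (\<lfloor>log 2 r\<rfloor> + 1)" using assms by simp
qed

lemma growth_profile_le_dyadic_sum:
  fixes r \<alpha> \<beta> :: real
  assumes r: "r \<ge> 0" and "\<alpha> > 0" "\<beta> > 0"
  shows "ennreal (growth_profile \<alpha> \<beta> r) \<le>
     (\<Sum>n. ennreal (2 powr ((real n + 1) * \<beta>)) * indicator {2 powr real n..} r)
   + (\<Sum>n. ennreal (2 powr (- (real n * \<alpha>))) * indicator {2 powr (- (real n + 1))..} r)"
    (is "_ \<le> ?S1 + ?S2")
proof (cases "r = 0")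
  case True then show ?thesis by (simp add: growth_profile_def)
next
  case False
  then have "r > 0" using r by simp
  then obtain k :: int where k: "2 powr k \<le> r" "r \<le> 2 powr (k + 1)"
    by (rule dyadic_bracket)
  show ?thesis
  proof (cases "k \<ge> 0")
    case True
    define n where "n = nat k"
    have "1 \<le> r" using k(1) True ge_one_powr_ge_zero[of 2 k] by simp
    then have "growth_profile \<alpha> \<beta> r \<le> r powr \<beta>" by (simp add: growth_profile_def)
    also have "\<dots> \<le> (2 powr (real n + 1)) powr \<beta>"
      using k(2) True r \<open>\<beta> > 0\<close> by (simp add: n_def powr_mono2)
    finally have "ennreal (growth_profile \<alpha> \<beta> r)
        \<le> ennreal (2 powr ((real n + 1) * \<beta>)) * indicator {2 powr real n..} r"
      using k(1) True by (simp add: n_def powr_powr ennreal_leI)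
    also have "\<dots> \<le> ?S1" by (rule term_le_suminf_ennreal)
    finally show ?thesis by (simp add: add_increasing2)
  next
    case False
    define n where "n = nat (- k - 1)"
    have "2 powr (k + 1) \<le> (1::real)" using False powr_mono[of "k + 1" 0 2] by simp
    then have "r \<le> 1" using k(2) by simp
    then have "growth_profile \<alpha> \<beta> r = r powr \<alpha>" by (simp add: growth_profile_def)
    also have "\<dots> \<le> (2 powr (- real n)) powr \<alpha>"
      using k(2) False r \<open>\<alpha> > 0\<close> by (intro powr_mono2) (auto simp: n_def add.commute)
    finally have "ennreal (growth_profile \<alpha> \<beta> r)
        \<le> ennreal (2 powr (- (real n * \<alpha>))) * indicator {2 powr (- (real n + 1))..} r"
      using k(1) False by (simp add: n_def powr_powr ennreal_leI algebra_simps)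
    also have "\<dots> \<le> ?S2" by (rule term_le_suminf_ennreal)
    finally show ?thesis by (simp add: add_increasing)
  qed
qed

lemma nn_integral_growth_profile_le_dyadic_sums:
  fixes u :: "'a::euclidean_space \<Rightarrow> real"
  assumes u: "u \<in> borel_measurable lborel" and "\<alpha> > 0" "\<beta> > 0"
    and fin: "\<And>l. l > 0 \<Longrightarrow> emeasure lborel (superlevel u l) < \<infinity>"
  shows "(\<integral>\<^sup>+ x. ennreal (growth_profile \<alpha> \<beta> \<bar>u x\<bar>) \<partial>lborel) \<le>
     (\<Sum>n. ennreal (2 powr ((real n + 1) * \<beta>) * measure lborel (superlevel u (2 powr real n))))
   + (\<Sum>n. ennreal (2 powr (- (real n * \<alpha>)) * measure lborel (superlevel u (2 powr (- (real n + 1))))))"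
proof -
  have em: "emeasure lborel (superlevel u l) = ennreal (measure lborel (superlevel u l))" if "l > 0" for l
    using fin[OF that] by (intro emeasure_eq_ennreal_measure) (auto simp: top_unique)
  have ind: "indicator {l..} \<bar>u x\<bar> = (indicator (superlevel u l) x :: ennreal)" for l x
    by (simp add: indicator_def superlevel_def)
  have mf: "(\<lambda>x. ennreal c * indicator (superlevel u l) x) \<in> borel_measurable lborel" for c l
    using sets_superlevel[OF u] by measurable
  have int: "(\<integral>\<^sup>+ x. (\<Sum>n. ennreal (c n) * indicator (superlevel u (l n)) x) \<partial>lborel)
      = (\<Sum>n. ennreal (c n * measure lborel (superlevel u (l n))))"
    if "\<And>n. l n > 0" "\<And>n. c n \<ge> 0" for c l :: "nat \<Rightarrow> real"
    using that by (subst nn_integral_suminf[OF mf])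
      (simp add: nn_integral_cmult_indicator[OF sets_superlevel[OF u]] em ennreal_mult)
  have "(\<integral>\<^sup>+ x. ennreal (growth_profile \<alpha> \<beta> \<bar>u x\<bar>) \<partial>lborel) \<le>
     (\<integral>\<^sup>+ x. (\<Sum>n. ennreal (2 powr ((real n + 1) * \<beta>)) * indicator (superlevel u (2 powr real n)) x)
   + (\<Sum>n. ennreal (2 powr (- (real n * \<alpha>))) * indicator (superlevel u (2 powr (- (real n + 1)))) x) \<partial>lborel)"
  proof (rule nn_integral_mono)
    fix x
    show "ennreal (growth_profile \<alpha> \<beta> \<bar>u x\<bar>) \<le>
        (\<Sum>n. ennreal (2 powr ((real n + 1) * \<beta>)) * indicator (superlevel u (2 powr real n)) x)
      + (\<Sum>n. ennreal (2 powr (- (real n * \<alpha>))) * indicator (superlevel u (2 powr (- (real n + 1)))) x)"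
      using growth_profile_le_dyadic_sum[OF abs_ge_zero \<open>\<alpha> > 0\<close> \<open>\<beta> > 0\<close>, of "u x"] by (simp only: ind)
  qed
  also have "\<dots> = (\<integral>\<^sup>+ x. (\<Sum>n. ennreal (2 powr ((real n + 1) * \<beta>)) * indicator (superlevel u (2 powr real n)) x) \<partial>lborel)
     + (\<integral>\<^sup>+ x. (\<Sum>n. ennreal (2 powr (- (real n * \<alpha>))) * indicator (superlevel u (2 powr (- (real n + 1)))) x) \<partial>lborel)"
    by (rule nn_integral_add) (intro borel_measurable_suminf_order mf)+
  also have "\<dots> = (\<Sum>n. ennreal (2 powr ((real n + 1) * \<beta>) * measure lborel (superlevel u (2 powr real n))))
   + (\<Sum>n. ennreal (2 powr (- (real n * \<alpha>)) * measure lborel (superlevel u (2 powr (- (real n + 1))))))"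
    by (simp add: int)
  finally show ?thesis .
qed

lemma dyadic_decay_superlevel:
  fixes u :: "real^'n \<Rightarrow> real"
  defines "d \<equiv> real CARD('n)"
  assumes u: "u \<in> borel_measurable lborel" "integrable lborel (\<lambda>x. u x^2)"
    and "s > 0" "gagliardo s u < \<infinity>"
  shows "dyadic_decay (\<integral>x. u x^2 \<partial>lborel) ((d * 2 powr (1/d) / 2) powr (d + 2 * s)) (2 * s / d)
           (enn2real (gagliardo s u)) (\<lambda>l. measure lborel (superlevel u l))"
  unfolding dyadic_decay_def
proof (intro allI impI conjI)
  fix l :: real assume "l > 0"
  show "0 \<le> measure lborel (superlevel u l)" by simp
  show "measure lborel (superlevel u l) \<le> (\<integral>x. u x^2 \<partial>lborel) / l^2"
    by (rule measure_superlevel_le_integral[OF u \<open>l > 0\<close>])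
  have "measure lborel (superlevel u (2 * l)) \<le> (d * 2 powr (1/d) / 2) powr (d + 2 * s)
      * measure lborel (superlevel u l) powr (2 * s / d) * enn2real (gagliardo s u) / (2 * l - l)^2"
    unfolding d_def using \<open>l > 0\<close> assms
    by (intro measure_superlevel_le_gagliardo emeasure_superlevel_finite) auto
  then show "measure lborel (superlevel u (2 * l)) \<le> (d * 2 powr (1/d) / 2) powr (d + 2 * s)
      * measure lborel (superlevel u l) powr (2 * s / d) * enn2real (gagliardo s u) / l^2"
    by simp
qed

lemma AE_eq_0_of_gagliardo_eq_0:
  fixes u :: "real^'n \<Rightarrow> real"
  assumes u: "u \<in> borel_measurable lborel" "integrable lborel (\<lambda>x. u x^2)"
    and s: "s > 0" "gagliardo s u < \<infinity>" and B0: "enn2real (gagliardo s u) = 0"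
  shows "AE x in lborel. u x = 0"
proof -
  have null: "superlevel u l \<in> null_sets lborel" if "l > 0" for l
  proof -
    have "measure lborel (superlevel u l) = 0"
      using dyadic_decay_zero[OF dyadic_decay_superlevel[OF u s, unfolded B0] that] .
    then show ?thesis
      using emeasure_superlevel_finite[OF u that] sets_superlevel[OF u(1)]
      by (auto simp: null_sets_def emeasure_eq_ennreal_measure top_unique)
  qed
  have "{x. u x \<noteq> 0} = (\<Union>n. superlevel u (1 / Suc n))"
  proof (intro set_eqI iffI)
    fix x assume "x \<in> {x. u x \<noteq> 0}"
    then obtain n where "1 / Suc n < \<bar>u x\<bar>"
      using reals_Archimedean[of "\<bar>u x\<bar>"] by (auto simp: inverse_eq_divide)
    then have "x \<in> superlevel u (1 / Suc n)" by (simp add: superlevel_def)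
    then show "x \<in> (\<Union>n. superlevel u (1 / Suc n))" by blast
  qed (auto simp: superlevel_def)
  also have "\<dots> \<in> null_sets lborel" using null by (intro null_sets_UN) simp
  finally show ?thesis by (auto simp: eventually_ae_filter intro!: exI[of _ "{x. u x \<noteq> 0}"])
qed

lemma gagliardo_pos_of_integral_pos:
  fixes u :: "real^'n \<Rightarrow> real"
  assumes u: "u \<in> borel_measurable lborel" "integrable lborel (\<lambda>x. u x^2)"
    and "s > 0" "gagliardo s u < \<infinity>" "(\<integral>x. u x^2 \<partial>lborel) > 0"
  shows "enn2real (gagliardo s u) > 0"
proof (rule ccontr)
  assume "\<not> enn2real (gagliardo s u) > 0"
  then have "enn2real (gagliardo s u) = 0" using enn2real_nonneg[of "gagliardo s u"] by linarith
  then have "AE x in lborel. u x^2 = 0"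
    using AE_eq_0_of_gagliardo_eq_0[OF u \<open>s > 0\<close> \<open>gagliardo s u < \<infinity>\<close>] by auto
  then show False using integral_eq_zero_AE \<open>(\<integral>x. u x^2 \<partial>lborel) > 0\<close> by fastforce
qed

text \<open>A Gagliardo--Nirenberg type inequality on the sphere \<open>|u|\<^sub>2\<^sup>2 = a\<close>, obtained from the level-set
  iteration instead of the fractional Sobolev embedding.\<close>
lemma nn_integral_growth_profile_le_gagliardo_powr:
  fixes s a \<alpha> \<beta> :: real
  defines "\<gamma> \<equiv> 2 * s / real CARD('n::finite)"
  assumes "s > 0" "a > 0" "2 + 2 * \<gamma> < \<alpha>" "\<beta> * (1 - \<gamma>) < 2" "\<beta> > 0"
  obtains \<theta> C where "\<theta> > 1" "C \<ge> 0"
    "\<And>u :: real^'n \<Rightarrow> real. u \<in> borel_measurable lborel \<Longrightarrow> integrable lborel (\<lambda>x. u x^2) \<Longrightarrow>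
       (\<integral>x. u x^2 \<partial>lborel) = a \<Longrightarrow> gagliardo s u < \<infinity> \<Longrightarrow>
       0 < enn2real (gagliardo s u) \<Longrightarrow> enn2real (gagliardo s u) \<le> 1 \<Longrightarrow>
       (\<integral>\<^sup>+ x. ennreal (growth_profile \<alpha> \<beta> \<bar>u x\<bar>) \<partial>lborel) \<le> ennreal (C * enn2real (gagliardo s u) powr \<theta>)"
proof -
  define d where "d = real CARD('n)"
  define K where "K = (d * 2 powr (1/d) / 2) powr (d + 2 * s)"
  have "K > 0" unfolding K_def d_def by simp
  have "\<gamma> > 0" unfolding \<gamma>_def using \<open>s > 0\<close> by simp
  obtain \<theta> C where "\<theta> > 1" "C \<ge> 0" and sums:
    "\<And>\<mu> B. dyadic_decay a K \<gamma> B \<mu> \<Longrightarrow> 0 < B \<Longrightarrow> B \<le> 1 \<Longrightarrow>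
       (\<Sum>n. ennreal (2 powr ((real n + 1) * \<beta>) * \<mu> (2 powr real n)))
       + (\<Sum>n. ennreal (2 powr (- (real n * \<alpha>)) * \<mu> (2 powr (- (real n + 1)))))
       \<le> ennreal (C * B powr \<theta>)"
    by (rule dyadic_sums_le_powr[OF \<open>a > 0\<close> \<open>K > 0\<close> \<open>\<gamma> > 0\<close> assms(4,5)]) blast
  show ?thesis
  proof (rule that[OF \<open>\<theta> > 1\<close> \<open>C \<ge> 0\<close>])
    fix u :: "real^'n \<Rightarrow> real"
    assume u: "u \<in> borel_measurable lborel" "integrable lborel (\<lambda>x. u x^2)"
      and "(\<integral>x. u x^2 \<partial>lborel) = a" "gagliardo s u < \<infinity>"
      and "0 < enn2real (gagliardo s u)" "enn2real (gagliardo s u) \<le> 1"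
    have "\<alpha> > 0" using assms(4) \<open>\<gamma> > 0\<close> by simp
    have "(\<integral>\<^sup>+ x. ennreal (growth_profile \<alpha> \<beta> \<bar>u x\<bar>) \<partial>lborel) \<le>
       (\<Sum>n. ennreal (2 powr ((real n + 1) * \<beta>) * measure lborel (superlevel u (2 powr real n))))
     + (\<Sum>n. ennreal (2 powr (- (real n * \<alpha>)) * measure lborel (superlevel u (2 powr (- (real n + 1))))))"
      using emeasure_superlevel_finite[OF u]
      by (intro nn_integral_growth_profile_le_dyadic_sums[OF u(1) \<open>\<alpha> > 0\<close> \<open>\<beta> > 0\<close>])
    also have "\<dots> \<le> ennreal (C * enn2real (gagliardo s u) powr \<theta>)"
    proof -
      have "dyadic_decay a K \<gamma> (enn2real (gagliardo s u)) (\<lambda>l. measure lborel (superlevel u l))"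
        using dyadic_decay_superlevel[OF u \<open>s > 0\<close> \<open>gagliardo s u < \<infinity>\<close>] \<open>(\<integral>x. u x^2 \<partial>lborel) = a\<close>
        unfolding K_def d_def \<gamma>_def by simp
      from sums[OF this \<open>0 < enn2real (gagliardo s u)\<close> \<open>enn2real (gagliardo s u) \<le> 1\<close>]
      show ?thesis by simp
    qed
    finally show "(\<integral>\<^sup>+ x. ennreal (growth_profile \<alpha> \<beta> \<bar>u x\<bar>) \<partial>lborel)
        \<le> ennreal (C * enn2real (gagliardo s u) powr \<theta>)" .
  qed
qed

lemma integral_le_of_le_growth_profile:
  fixes u :: "'a::euclidean_space \<Rightarrow> real" and F :: "real \<Rightarrow> real"
  assumes u: "u \<in> borel_measurable lborel" and F: "F \<in> borel_measurable borel"
    and F_nonneg: "\<And>r. 0 \<le> F r" and F_le: "\<And>r. F r \<le> k * growth_profile \<alpha> \<beta> \<bar>r\<bar>"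
    and "k \<ge> 0" "X \<ge> 0"
    and profile: "(\<integral>\<^sup>+ x. ennreal (growth_profile \<alpha> \<beta> \<bar>u x\<bar>) \<partial>lborel) \<le> ennreal X"
  shows "(\<integral>x. F (u x) \<partial>lborel) \<le> k * X"
proof (cases "integrable lborel (\<lambda>x. F (u x))")
  case False
  then show ?thesis using \<open>k \<ge> 0\<close> \<open>X \<ge> 0\<close> by (simp add: not_integrable_integral_eq)
next
  case True
  have [measurable]: "u \<in> borel_measurable borel" using u by simp
  have "(\<integral>\<^sup>+ x. ennreal (F (u x)) \<partial>lborel) \<le> (\<integral>\<^sup>+ x. ennreal k * ennreal (growth_profile \<alpha> \<beta> \<bar>u x\<bar>) \<partial>lborel)"
    using F_le \<open>k \<ge> 0\<close> growth_profile_nonneg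
    by (intro nn_integral_mono) (simp add: ennreal_mult[symmetric] ennreal_leI)
  also have "\<dots> = ennreal k * (\<integral>\<^sup>+ x. ennreal (growth_profile \<alpha> \<beta> \<bar>u x\<bar>) \<partial>lborel)"
    by (intro nn_integral_cmult) measurable
  also have "\<dots> \<le> ennreal (k * X)"
    using mult_left_mono[OF profile] \<open>k \<ge> 0\<close> \<open>X \<ge> 0\<close> by (simp add: ennreal_mult)
  finally have "enn2real (\<integral>\<^sup>+ x. ennreal (F (u x)) \<partial>lborel) \<le> k * X"
    using \<open>k \<ge> 0\<close> \<open>X \<ge> 0\<close> by (intro enn2real_leI) simp_all
  moreover have "(\<integral>x. F (u x) \<partial>lborel) = enn2real (\<integral>\<^sup>+ x. ennreal (F (u x)) \<partial>lborel)"
    using u F F_nonneg by (intro integral_eq_nn_integral) auto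
  ultimately show ?thesis by simp
qed

section \<open>The Pohozaev constraint\<close>

lemma le_of_mult_le_powr:
  fixes s c \<theta> B :: real
  assumes "0 < s" "0 < c" "1 < \<theta>" "0 < B" "s * B \<le> c * B powr \<theta>"
  shows "(s / c) powr (1 / (\<theta> - 1)) \<le> B"
proof -
  have "s * B \<le> (c * B powr (\<theta> - 1)) * B"
    using assms by (simp add: powr_diff mult.assoc)
  then have "s / c \<le> B powr (\<theta> - 1)" using assms by (simp add: field_simps)
  then have "(s / c) powr (1 / (\<theta> - 1)) \<le> (B powr (\<theta> - 1)) powr (1 / (\<theta> - 1))"
    using assms by (intro powr_mono2) auto
  also have "\<dots> = B" using assms by (simp add: powr_powr)
  finally show ?thesis .
qed

lemma subcritical_exponent_bound:
  fixes s1 s2 d \<beta> :: real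
  assumes "0 < s1" "s1 < s2" "2 * s1 < d" "0 < \<beta>" "\<beta> < 2 * d / (d - 2 * s1)"
  shows "\<beta> * (1 - 2 * s2 / d) < 2"
proof (cases "2 * s2 < d")
  case True
  have "d > 0" using assms by simp
  then have eq: "1 - 2 * s2 / d = (d - 2 * s2) / d" by (simp add: field_simps)
  have "(d - 2 * s2) / d > 0" using True \<open>d > 0\<close> by simp
  then have "\<beta> * (1 - 2 * s2 / d) < 2 * d / (d - 2 * s1) * ((d - 2 * s2) / d)"
    unfolding eq by (rule mult_strict_right_mono[OF assms(5)])
  also have "\<dots> = 2 * (d - 2 * s2) / (d - 2 * s1)" using assms by (simp add: field_simps)
  also have "\<dots> \<le> 2" using assms by (simp add: field_simps)
  finally show ?thesis .
next
  case False
  then have "1 - 2 * s2 / d \<le> 0" using assms by (simp add: field_simps)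
  then show ?thesis using \<open>0 < \<beta>\<close> by (smt (verit) mult_nonneg_nonpos)
qed

lemma gagliardo_le_of_Pinf_eq_0:
  fixes u :: "real^'n \<Rightarrow> real"
  assumes "Pinf s1 s2 g u = 0" "s1 \<ge> 0"
  shows "s2 * enn2real (gagliardo s2 u) \<le> real CARD('n) * (\<integral>x. Gtilde g (u x) \<partial>lborel)"
proof -
  have "0 \<le> s1 * enn2real (gagliardo s1 u)" using assms(2) by simp
  then show ?thesis using assms(1) unfolding Pinf_def by linarith
qed

context AR_nonlinearity
begin

lemma integral_Gprim_le_integral_Gtilde:
  fixes u :: "'a::euclidean_space \<Rightarrow> real"
  assumes u: "u \<in> borel_measurable lborel"
  shows "(\<integral>x. Gprim g (u x) \<partial>lborel) \<le> (\<integral>x. Gtilde g (u x) \<partial>lborel) / (\<alpha>/2 - 1)"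
proof (cases "integrable lborel (\<lambda>x. Gprim g (u x))")
  case False
  moreover have "0 \<le> (\<integral>x. Gtilde g (u x) \<partial>lborel)" by (intro integral_nonneg_AE) (simp add: Gtilde_nonneg)
  ultimately show ?thesis using exponents by (simp add: not_integrable_integral_eq)
next
  case True
  have [measurable]: "u \<in> borel_measurable borel" using u by simp
  have "integrable lborel (\<lambda>x. Gtilde g (u x))"
  proof (rule Bochner_Integration.integrable_bound[where f="\<lambda>x. (\<beta>/2 - 1) * Gprim g (u x)"])
    show "AE x in lborel. norm (Gtilde g (u x)) \<le> norm ((\<beta>/2 - 1) * Gprim g (u x))"
      using Gtilde_nonneg Gtilde_le_Gprim Gprim_nonneg exponents by (auto simp: abs_mult)
  qed (use True in simp_all)
  then have "(\<integral>x. (\<alpha>/2 - 1) * Gprim g (u x) \<partial>lborel) \<le> (\<integral>x. Gtilde g (u x) \<partial>lborel)"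
    using True Gtilde_ge_Gprim by (intro integral_mono) auto
  then have "(\<alpha>/2 - 1) * (\<integral>x. Gprim g (u x) \<partial>lborel) \<le> (\<integral>x. Gtilde g (u x) \<partial>lborel)"
    by (simp only: integral_mult_right_zero)
  then show ?thesis using exponents by (simp add: pos_le_divide_eq mult.commute)
qed

lemma energy_ge_of_Pinf_eq_0:
  fixes u :: "real^'n \<Rightarrow> real"
  defines "\<kappa> \<equiv> 1 / (real CARD('n) * (\<alpha>/2 - 1))"
  assumes "u \<in> borel_measurable lborel" "Pinf s1 s2 g u = 0"
  shows "(1/2 - \<kappa> * s1) * enn2real (gagliardo s1 u) + (1/2 - \<kappa> * s2) * enn2real (gagliardo s2 u)
           \<le> energy s1 s2 g u"
proof -
  define A where "A = enn2real (gagliardo s1 u)"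
  define B where "B = enn2real (gagliardo s2 u)"
  define T where "T = (\<integral>x. Gtilde g (u x) \<partial>lborel)"
  have "s1 * A + s2 * B = real CARD('n) * T"
    using assms(3) by (simp add: Pinf_def A_def B_def T_def)
  then have "T / (\<alpha>/2 - 1) = \<kappa> * (s1 * A + s2 * B)"
    using exponents by (simp add: \<kappa>_def field_simps)
  moreover have "(\<integral>x. Gprim g (u x) \<partial>lborel) \<le> T / (\<alpha>/2 - 1)"
    unfolding T_def by (rule integral_Gprim_le_integral_Gtilde[OF assms(2)])
  ultimately show ?thesis by (simp add: energy_def A_def B_def algebra_simps)
qed

lemma gagliardo_bounded_below_on_Pohozaev_set:
  fixes s1 s2 a :: real
  defines "d \<equiv> real CARD('n::finite)"
  assumes "0 < s1" "s1 < s2" "a > 0" "2 + 4 * s2 / d < \<alpha>" "\<beta> * (1 - 2 * s2 / d) < 2"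
  obtains b where "b > 0"
    "\<And>u :: real^'n \<Rightarrow> real. u \<in> Pohozaev_set s1 s2 g a \<Longrightarrow> b \<le> enn2real (gagliardo s2 u)"
proof -
  have "d > 0" "s2 > 0" "\<beta> > 0" using assms(2,3) exponents by (auto simp: d_def)
  have exps: "2 + 2 * (2 * s2 / real CARD('n)) < \<alpha>" "\<beta> * (1 - 2 * s2 / real CARD('n)) < 2"
    using assms(5,6) by (simp_all add: d_def)
  define k where "k = (\<beta>/2 - 1) * max (Gprim g 1) (Gprim g (-1))"
  have "k \<ge> 0" using Gprim_nonneg[of 1] exponents by (simp add: k_def)
  obtain \<theta> C where "\<theta> > 1" "C \<ge> 0" and profile:
    "\<And>u :: real^'n \<Rightarrow> real. u \<in> borel_measurable lborel \<Longrightarrow> integrable lborel (\<lambda>x. u x^2) \<Longrightarrow>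
       (\<integral>x. u x^2 \<partial>lborel) = a \<Longrightarrow> gagliardo s2 u < \<infinity> \<Longrightarrow>
       0 < enn2real (gagliardo s2 u) \<Longrightarrow> enn2real (gagliardo s2 u) \<le> 1 \<Longrightarrow>
       (\<integral>\<^sup>+ x. ennreal (growth_profile \<alpha> \<beta> \<bar>u x\<bar>) \<partial>lborel) \<le> ennreal (C * enn2real (gagliardo s2 u) powr \<theta>)"
    by (rule nn_integral_growth_profile_le_gagliardo_powr[OF \<open>s2 > 0\<close> \<open>a > 0\<close> exps \<open>\<beta> > 0\<close>]) blast
  define c where "c = d * k * C + 1"
  have "0 \<le> d * k * C" using \<open>d > 0\<close> \<open>k \<ge> 0\<close> \<open>C \<ge> 0\<close> by simp
  then have "c > 0" by (simp add: c_def)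
  show ?thesis
  proof (rule that)
    show "min 1 ((s2 / c) powr (1 / (\<theta> - 1))) > 0" using \<open>s2 > 0\<close> \<open>c > 0\<close> by simp
    fix u :: "real^'n \<Rightarrow> real" assume "u \<in> Pohozaev_set s1 s2 g a"
    then have u: "u \<in> borel_measurable lborel" "integrable lborel (\<lambda>x. u x^2)"
      and "gagliardo s2 u < \<infinity>" "(\<integral>x. u x^2 \<partial>lborel) = a" "Pinf s1 s2 g u = 0"
      by (auto simp: Pohozaev_set_def Ssphere_def Hspace_def)
    define B where "B = enn2real (gagliardo s2 u)"
    have "B > 0"
      unfolding B_def using \<open>s2 > 0\<close> \<open>gagliardo s2 u < \<infinity>\<close> \<open>(\<integral>x. u x^2 \<partial>lborel) = a\<close> \<open>a > 0\<close>
      by (intro gagliardo_pos_of_integral_pos[OF u]) auto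
    show "min 1 ((s2 / c) powr (1 / (\<theta> - 1))) \<le> B"
    proof (cases "B \<le> 1")
      case True
      have "(\<integral>x. Gtilde g (u x) \<partial>lborel) \<le> k * (C * B powr \<theta>)"
        using profile[OF u _ \<open>gagliardo s2 u < \<infinity>\<close>] \<open>(\<integral>x. u x^2 \<partial>lborel) = a\<close> \<open>B > 0\<close> True
          Gtilde_nonneg Gtilde_le_growth_profile \<open>k \<ge> 0\<close> \<open>C \<ge> 0\<close>
        by (intro integral_le_of_le_growth_profile[OF u(1)]) (auto simp: B_def k_def)
      moreover have "s2 * B \<le> d * (\<integral>x. Gtilde g (u x) \<partial>lborel)"
        using gagliardo_le_of_Pinf_eq_0[OF \<open>Pinf s1 s2 g u = 0\<close>] \<open>0 < s1\<close> by (simp add: B_def d_def)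
      ultimately have "s2 * B \<le> d * (k * (C * B powr \<theta>))"
        using \<open>d > 0\<close> by (meson mult_left_mono order_trans less_imp_le)
      also have "\<dots> \<le> c * B powr \<theta>" by (simp add: c_def distrib_right)
      finally have "(s2 / c) powr (1 / (\<theta> - 1)) \<le> B"
        by (rule le_of_mult_le_powr[OF \<open>s2 > 0\<close> \<open>c > 0\<close> \<open>\<theta> > 1\<close> \<open>B > 0\<close>])
      then show ?thesis by simp
    qed simp
  qed
qed

lemma energy_bounded_below_on_Pohozaev_set:
  fixes s1 s2 a :: real
  defines "d \<equiv> real CARD('n::finite)"
  assumes "0 < s1" "s1 < s2" "a > 0" "2 + 4 * s2 / d < \<alpha>" "\<beta> * (1 - 2 * s2 / d) < 2"
  obtains e where "e > 0"
    "\<And>u :: real^'n \<Rightarrow> real. u \<in> Pohozaev_set s1 s2 g a \<Longrightarrow> e \<le> energy s1 s2 g u"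
proof -
  obtain b where "b > 0" and b: "\<And>u :: real^'n \<Rightarrow> real. u \<in> Pohozaev_set s1 s2 g a \<Longrightarrow> b \<le> enn2real (gagliardo s2 u)"
    using gagliardo_bounded_below_on_Pohozaev_set[OF assms(2-6)[unfolded d_def]] by blast
  define \<kappa> where "\<kappa> = 1 / (d * (\<alpha>/2 - 1))"
  have "d > 0" by (simp add: d_def)
  have "\<kappa> * s2 < 1/2" using assms(5) \<open>d > 0\<close> exponents by (simp add: \<kappa>_def field_simps)
  have "\<kappa> > 0" using \<open>d > 0\<close> exponents by (simp add: \<kappa>_def)
  then have "\<kappa> * s1 \<le> \<kappa> * s2" using assms(3) by simp
  show ?thesis
  proof (rule that)
    show "(1/2 - \<kappa> * s2) * b > 0" using \<open>\<kappa> * s2 < 1/2\<close> \<open>b > 0\<close> by simp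
    fix u :: "real^'n \<Rightarrow> real" assume u: "u \<in> Pohozaev_set s1 s2 g a"
    then have "u \<in> borel_measurable lborel" "Pinf s1 s2 g u = 0"
      by (auto simp: Pohozaev_set_def Ssphere_def Hspace_def)
    then have "(1/2 - \<kappa> * s1) * enn2real (gagliardo s1 u) + (1/2 - \<kappa> * s2) * enn2real (gagliardo s2 u)
        \<le> energy s1 s2 g u"
      unfolding \<kappa>_def d_def by (rule energy_ge_of_Pinf_eq_0)
    moreover have "0 \<le> (1/2 - \<kappa> * s1) * enn2real (gagliardo s1 u)"
      using \<open>\<kappa> * s1 \<le> \<kappa> * s2\<close> \<open>\<kappa> * s2 < 1/2\<close> by simp
    moreover have "(1/2 - \<kappa> * s2) * b \<le> (1/2 - \<kappa> * s2) * enn2real (gagliardo s2 u)"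
      using b[OF u] \<open>\<kappa> * s2 < 1/2\<close> by (intro mult_left_mono) auto
    ultimately show "(1/2 - \<kappa> * s2) * b \<le> energy s1 s2 g u" by linarith
  qed
qed

end

theorem lemma3p5:
  fixes s1 s2 a \<alpha> \<beta> :: real and g :: "real \<Rightarrow> real"
  defines "d \<equiv> real CARD('n::finite)"
  assumes "0 < s1" "s1 < s2" "s2 < 1"
    and "2 * s1 < d" "d < 2 * s1 * s2 / (s2 - s1)"
    and "a > 0"
    and G1_cont: "continuous_on UNIV g" and G1_odd: "\<And>s. g (- s) = - g s"
    and G2_exps: "2 + 4 * s2 / d < \<alpha>" "\<alpha> < \<beta>" "\<beta> < 2 * d / (d - 2 * s1)"
    and G2_ineq: "\<And>s. \<alpha> * Gprim g s \<le> g s * s \<and> g s * s \<le> \<beta> * Gprim g s"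
    and G3_diff: "\<And>s. Gtilde g differentiable (at s)"
    and G3_ineq: "\<And>s. deriv (Gtilde g) s * s \<ge> \<alpha> * Gtilde g s"
  shows "m_level TYPE('n) s1 s2 g a > 0"
proof -
  have "4 * s2 / d > 0" using \<open>0 < s1\<close> \<open>s1 < s2\<close> by (simp add: d_def)
  then have "2 < \<alpha>" using G2_exps(1) by linarith
  then interpret AR_nonlinearity g \<alpha> \<beta>
    using G1_cont G2_ineq G2_exps(2) by unfold_locales
  have "\<beta> * (1 - 2 * s2 / d) < 2"
    using \<open>2 < \<alpha>\<close> G2_exps by (intro subcritical_exponent_bound[OF \<open>0 < s1\<close> \<open>s1 < s2\<close> \<open>2 * s1 < d\<close>]) auto
  then obtain e where "e > 0" and "\<And>u :: real^'n \<Rightarrow> real. u \<in> Pohozaev_set s1 s2 g a \<Longrightarrow> e \<le> energy s1 s2 g u"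
    using energy_bounded_below_on_Pohozaev_set[OF \<open>0 < s1\<close> \<open>s1 < s2\<close> \<open>a > 0\<close>] G2_exps(1)
    unfolding d_def by blast
  then have "ereal e \<le> m_level TYPE('n) s1 s2 g a"
    unfolding m_level_def by (intro INF_greatest) simp
  moreover have "0 < ereal e" using \<open>e > 0\<close> by simp
  ultimately show ?thesis by (rule order.strict_trans2[rotated])
qed

end
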